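(* For all $n\ge 0$, $|F_n(321,3142,2143)|=\binom{n}{2}+1$.
   Context: A permutation $\pi$ avoids a classical pattern $p\in S_k$ if no subsequence of $\pi$ of length $k$ is order-isomorphic to $p$. A Fishburn permutation is a permutation $\pi=\pi_1\cdots\pi_n$ of $[n]$ for which there are no indices $i<j$ with $\pi_j<\pi_i<\pi_{i+1}$ and $\pi_i=\pi_j+1$. $F_n(\sigma_1,\dots,\sigma_k)$ denotes the set of Fishburn permutations of length $n$ avoiding each of the classical patterns $\sigma_1,\dots,\sigma_k$ (with $F_0$ containing only the empty permutation). *)

theory Defs
  imports Main
begin

text \<open>Permutations of [n] are represented as lists (one-line notation) whose
entries are exactly 1..n, each once. Indices below are 0-based.\<close>

definition is_perm :: "nat \<Rightarrow> nat list \<Rightarrow> bool" where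
  "is_perm n \<pi> \<longleftrightarrow> length \<pi> = n \<and> distinct \<pi> \<and> set \<pi> = {1..n}"

definition contains :: "nat list \<Rightarrow> nat list \<Rightarrow> bool" where
  "contains \<pi> p \<longleftrightarrow> (\<exists>idx. length idx = length p \<and> sorted_wrt (<) idx
      \<and> (\<forall>i<length idx. idx ! i < length \<pi>)
      \<and> (\<forall>i<length p. \<forall>j<length p. (\<pi> ! (idx ! i) < \<pi> ! (idx ! j)) \<longleftrightarrow> (p ! i < p ! j)))"

definition avoids :: "nat list \<Rightarrow> nat list \<Rightarrow> bool" where
  "avoids \<pi> p \<longleftrightarrow> \<not> contains \<pi> p"

definition fishburn :: "nat list \<Rightarrow> bool" where
  "fishburn \<pi> \<longleftrightarrow> \<not> (\<exists>i j. i < j \<and> j < length \<pi> \<and> Suc i < length \<pi>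
      \<and> \<pi> ! j < \<pi> ! i \<and> \<pi> ! i < \<pi> ! (Suc i) \<and> \<pi> ! i = \<pi> ! j + 1)"

definition F :: "nat \<Rightarrow> nat list list \<Rightarrow> nat list set" where
  "F n ps = {\<pi>. is_perm n \<pi> \<and> fishburn \<pi> \<and> (\<forall>p\<in>set ps. avoids \<pi> p)}"

end

theory Submission
  imports Defs
begin

text \<open>Split \<open>F\<^sub>n\<^sub>+\<^sub>1\<close> by the first entry. The permutations starting with 1 are exactly the
\<open>1 \<oplus> \<tau>\<close> with \<open>\<tau> \<in> F\<^sub>n\<close>, because each of the three patterns has an entry below its first one.
If \<open>\<pi>\<^sub>1 = c > 1\<close>, the Fishburn condition for \<open>c\<close> and \<open>c - 1\<close> forces \<open>\<pi>\<^sub>2 < c\<close>, avoiding 321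
then forces \<open>\<pi>\<^sub>2 = 1\<close>, and avoiding 321, 3142 and 2143 forces \<open>\<pi>\<^sub>2 \<dots> \<pi>\<^sub>n\<^sub>+\<^sub>1\<close> to increase.
Conversely every such \<open>c 1 2 \<dots> n+1\<close> (\<open>c\<close> omitted, \<open>c \<ge> 2\<close>) lies in \<open>F\<^sub>n\<^sub>+\<^sub>1\<close>, so
\<open>|F\<^sub>n\<^sub>+\<^sub>1| = |F\<^sub>n| + n\<close>.\<close>

lemma contains_321I:
  assumes "i < j" "j < k" "k < length \<pi>" "\<pi> ! k < \<pi> ! j" "\<pi> ! j < \<pi> ! i"
  shows "contains \<pi> [3,2,1]"
  unfolding contains_def
  by (rule exI[of _ "[i,j,k]"]) (use assms in \<open>auto simp: less_Suc_eq numeral_eq_Suc\<close>)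

lemma contains_3142I:
  assumes "i < j" "j < k" "k < l" "l < length \<pi>"
    and "\<pi> ! j < \<pi> ! l" "\<pi> ! l < \<pi> ! i" "\<pi> ! i < \<pi> ! k"
  shows "contains \<pi> [3,1,4,2]"
  unfolding contains_def
  by (rule exI[of _ "[i,j,k,l]"]) (use assms in \<open>auto simp: less_Suc_eq numeral_eq_Suc\<close>)

lemma contains_2143I:
  assumes "i < j" "j < k" "k < l" "l < length \<pi>"
    and "\<pi> ! j < \<pi> ! i" "\<pi> ! i < \<pi> ! l" "\<pi> ! l < \<pi> ! k"
  shows "contains \<pi> [2,1,4,3]"
  unfolding contains_def
  by (rule exI[of _ "[i,j,k,l]"]) (use assms in \<open>auto simp: less_Suc_eq numeral_eq_Suc\<close>)

lemma contains_map_iff: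
  assumes "\<forall>x\<in>set \<tau>. \<forall>y\<in>set \<tau>. f x < f y \<longleftrightarrow> x < y"
  shows "contains (map f \<tau>) p \<longleftrightarrow> contains \<tau> p"
proof -
  have "(map f \<tau> ! (idx ! i) < map f \<tau> ! (idx ! j)) \<longleftrightarrow> (\<tau> ! (idx ! i) < \<tau> ! (idx ! j))"
    if "\<forall>i<length idx. idx ! i < length \<tau>" "i < length idx" "j < length idx" for idx i j
    using assms that by (simp add: nth_mem)
  then show ?thesis
    unfolding contains_def length_map by (intro ex_cong1 conj_cong refl) (metis (no_types, lifting))
qed

lemma contains_Cons:
  assumes "contains \<sigma> p"
  shows "contains (a # \<sigma>) p"
proof -
  obtain idx where "length idx = length p" "sorted_wrt (<) idx"
      "\<forall>i<length idx. idx ! i < length \<sigma>"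
      "\<forall>i<length p. \<forall>j<length p. (\<sigma> ! (idx ! i) < \<sigma> ! (idx ! j)) \<longleftrightarrow> (p ! i < p ! j)"
    using assms unfolding contains_def by blast
  then show ?thesis
    unfolding contains_def by (intro exI[of _ "map Suc idx"]) (auto simp: sorted_wrt_map)
qed

lemma contains_Cons_below:
  assumes "contains (a # \<sigma>) p" and "\<forall>x\<in>set \<sigma>. a < x"
    and "k < length p" "p ! k < p ! 0"
  shows "contains \<sigma> p"
proof -
  obtain idx where len: "length idx = length p" and sorted: "sorted_wrt (<) idx"
      and bound: "\<forall>i<length idx. idx ! i < Suc (length \<sigma>)"
      and iso: "\<forall>i<length p. \<forall>j<length p. ((a # \<sigma>) ! (idx ! i) < (a # \<sigma>) ! (idx ! j)) \<longleftrightarrow> (p ! i < p ! j)"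
    using assms(1) unfolding contains_def by auto
  have "0 < k" using assms(4) by (cases k) auto
  then have "idx ! 0 < idx ! k" using sorted len assms(3) by (simp add: sorted_wrt_nth_less)
  then obtain q where q: "idx ! k = Suc q" by (cases "idx ! k") auto
  have "a < (a # \<sigma>) ! (idx ! k)" using q bound len assms(2,3) by (auto simp: nth_mem)
  moreover have "(a # \<sigma>) ! (idx ! k) < (a # \<sigma>) ! (idx ! 0)"
    using iso assms(3,4) by (metis gr_zeroI less_nat_zero_code)
  ultimately have "0 < idx ! 0" by (cases "idx ! 0") auto
  then have pos: "0 < idx ! i" if "i < length idx" for i
    using sorted that by (cases i) (auto dest: sorted_wrt_nth_less)
  show ?thesis
    unfolding contains_def
  proof (intro exI[of _ "map (\<lambda>x. x - 1) idx"] conjI allI impI)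
    show "sorted_wrt (<) (map (\<lambda>x. x - 1) idx)"
      using sorted pos
      by (auto simp: sorted_wrt_iff_nth_less Suc_le_eq intro!: diff_less_mono)
  next
    have shift: "(a # \<sigma>) ! (idx ! i) = \<sigma> ! (idx ! i - 1)" if "i < length p" for i
      using pos[of i] that len by (cases "idx ! i") auto
    fix i j assume "i < length p" "j < length p"
    then show "(\<sigma> ! (map (\<lambda>x. x - 1) idx ! i) < \<sigma> ! (map (\<lambda>x. x - 1) idx ! j)) \<longleftrightarrow> (p ! i < p ! j)"
      using iso len shift by auto
  qed (use len bound pos in \<open>force+\<close>)
qed

lemma fishburn_ConsD:
  assumes "fishburn (a # \<sigma>)"
  shows "fishburn \<sigma>"
  using assms unfolding fishburn_def
proof (elim contrapos_nn exE conjE)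
  fix i j assume "i < j" "j < length \<sigma>" "Suc i < length \<sigma>" "\<sigma> ! j < \<sigma> ! i"
    "\<sigma> ! i < \<sigma> ! Suc i" "\<sigma> ! i = \<sigma> ! j + 1"
  then show "\<exists>i j. i < j \<and> j < length (a # \<sigma>) \<and> Suc i < length (a # \<sigma>) \<and>
      (a # \<sigma>) ! j < (a # \<sigma>) ! i \<and> (a # \<sigma>) ! i < (a # \<sigma>) ! Suc i \<and> (a # \<sigma>) ! i = (a # \<sigma>) ! j + 1"
    by (intro exI[of _ "Suc i"] exI[of _ "Suc j"]) auto
qed

lemma fishburn_map_Suc: "fishburn (map Suc \<sigma>) \<longleftrightarrow> fishburn \<sigma>"
  unfolding fishburn_def
  by (intro arg_cong[where f = Not] iffI; elim exE conjE; intro exI conjI; assumption?; simp)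

definition one_oplus :: "nat list \<Rightarrow> nat list" where
  "one_oplus \<tau> = 1 # map Suc \<tau>"

lemma fishburn_one_oplus: "fishburn (one_oplus \<tau>) \<longleftrightarrow> fishburn \<tau>"
proof
  assume "fishburn (one_oplus \<tau>)"
  then show "fishburn \<tau>"
    unfolding one_oplus_def by (metis fishburn_ConsD fishburn_map_Suc)
next
  assume "fishburn \<tau>"
  then have tail: "fishburn (map Suc \<tau>)" by (simp add: fishburn_map_Suc)
  show "fishburn (one_oplus \<tau>)"
    unfolding fishburn_def
  proof (clarify)
    fix i j assume ij: "i < j" "j < length (one_oplus \<tau>)" "Suc i < length (one_oplus \<tau>)"
      "one_oplus \<tau> ! j < one_oplus \<tau> ! i" "one_oplus \<tau> ! i < one_oplus \<tau> ! Suc i"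
      "one_oplus \<tau> ! i = one_oplus \<tau> ! j + 1"
    obtain j' where j': "j = Suc j'" using ij(1) by (cases j) auto
    show False
    proof (cases i)
      case 0
      then show ?thesis using ij(2,6) j' by (simp add: one_oplus_def)
    next
      case (Suc i')
      then show ?thesis
        using tail ij j' unfolding fishburn_def one_oplus_def
        by (metis Suc_less_SucD length_Cons nth_Cons_Suc)
    qed
  qed
qed

lemma fishburn_Cons_sorted:
  assumes "sorted_wrt (<) xs" and "hd xs < c"
  shows "fishburn (c # xs)"
  unfolding fishburn_def
proof (clarify)
  fix i j assume ij: "i < j" "j < length (c # xs)" "(c # xs) ! j < (c # xs) ! i"
    "(c # xs) ! i < (c # xs) ! Suc i"
  show False
  proof (cases i)
    case 0
    then show ?thesis using ij assms(2) by (cases xs) auto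
  next
    case (Suc i')
    then obtain j' where "j = Suc j'" "i' < j'" "j' < length xs" using ij(1,2) by (cases j) auto
    then show ?thesis using ij(3) Suc assms(1) by (auto dest: sorted_wrt_nth_less)
  qed
qed

lemma is_perm_one_oplus: "is_perm (Suc n) (one_oplus \<tau>) \<longleftrightarrow> is_perm n \<tau>"
proof -
  have "insert 1 (Suc ` S) = {1..Suc n} \<and> 1 \<notin> Suc ` S \<longleftrightarrow> S = {1..n}" for S :: "nat set"
  proof
    assume S: "insert 1 (Suc ` S) = {1..Suc n} \<and> 1 \<notin> Suc ` S"
    show "S = {1..n}"
    proof (intro equalityI subsetI)
      fix x assume "x \<in> S"
      then have "Suc x \<in> {1..Suc n}" "Suc x \<noteq> 1" using S by (blast, metis imageI)
      then show "x \<in> {1..n}" by auto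
    next
      fix x assume "x \<in> {1..n}"
      then have "Suc x \<in> insert 1 (Suc ` S)" "Suc x \<noteq> 1" using S by auto
      then show "x \<in> S" by auto
    qed
  qed (auto simp: image_iff)
  then show ?thesis
    unfolding is_perm_def one_oplus_def by (auto simp: distinct_map)
qed

lemma contains_one_oplus_iff:
  assumes "0 \<notin> set \<tau>" and "k < length p" "p ! k < p ! 0"
  shows "contains (one_oplus \<tau>) p \<longleftrightarrow> contains \<tau> p"
proof -
  have "contains (map Suc \<tau>) p \<longleftrightarrow> contains \<tau> p"
    by (rule contains_map_iff) simp
  moreover have "\<forall>x\<in>set (map Suc \<tau>). 1 < x" using assms(1) by (auto intro: gr0I)
  ultimately show ?thesis
    unfolding one_oplus_def using contains_Cons contains_Cons_below[OF _ _ assms(2,3)] by blast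
qed

lemma is_perm_nth_mem: "is_perm n \<pi> \<Longrightarrow> i < n \<Longrightarrow> \<pi> ! i \<in> {1..n}"
  unfolding is_perm_def by (metis nth_mem)

lemma is_perm_nth_eq_iff: "is_perm n \<pi> \<Longrightarrow> i < n \<Longrightarrow> j < n \<Longrightarrow> \<pi> ! i = \<pi> ! j \<longleftrightarrow> i = j"
  unfolding is_perm_def by (metis nth_eq_iff_index_eq)

lemma is_perm_index_of:
  assumes "is_perm n \<pi>" "v \<in> {1..n}"
  obtains j where "j < n" "\<pi> ! j = v"
  using assms unfolding is_perm_def by (metis in_set_conv_nth)

lemma one_oplus_mem_F:
  assumes "\<tau> \<in> F n ps" and "\<forall>p\<in>set ps. \<exists>k<length p. p ! k < p ! 0"
  shows "one_oplus \<tau> \<in> F (Suc n) ps"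
proof -
  have perm: "is_perm n \<tau>" and "fishburn \<tau>" and av: "\<forall>p\<in>set ps. avoids \<tau> p"
    using assms(1) unfolding F_def by auto
  have "0 \<notin> set \<tau>" using perm unfolding is_perm_def by auto
  then have "avoids (one_oplus \<tau>) p" if "p \<in> set ps" for p
    using av assms(2) that contains_one_oplus_iff unfolding avoids_def by blast
  then show ?thesis
    unfolding F_def using perm \<open>fishburn \<tau>\<close> by (simp add: is_perm_one_oplus fishburn_one_oplus)
qed

lemma F_Suc_head_1:
  assumes "\<pi> \<in> F (Suc n) ps" and "\<pi> ! 0 = 1"
  shows "\<pi> \<in> one_oplus ` F n ps"
proof -
  have perm: "is_perm (Suc n) \<pi>" and fb: "fishburn \<pi>" and av: "\<forall>p\<in>set ps. avoids \<pi> p"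
    using assms(1) unfolding F_def by auto
  obtain \<sigma> where \<sigma>: "\<pi> = 1 # \<sigma>"
    using perm assms(2) unfolding is_perm_def by (cases \<pi>) auto
  define \<tau> where "\<tau> = map (\<lambda>x. x - 1) \<sigma>"
  have "0 \<notin> set \<sigma>" using perm \<sigma> unfolding is_perm_def by auto
  then have "map Suc \<tau> = \<sigma>" unfolding \<tau>_def by (induction \<sigma>) auto
  then have eq: "\<pi> = one_oplus \<tau>" using \<sigma> by (simp add: one_oplus_def)
  have "avoids \<tau> p" if "p \<in> set ps" for p
  proof -
    have "contains \<tau> p \<Longrightarrow> contains \<pi> p"
      unfolding eq one_oplus_def by (simp add: contains_Cons contains_map_iff)
    then show ?thesis using av that unfolding avoids_def by blast
  qed
  then have "\<tau> \<in> F n ps"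
    unfolding F_def using perm fb eq by (simp add: is_perm_one_oplus fishburn_one_oplus)
  then show ?thesis using eq by blast
qed

definition lead_sorted :: "nat \<Rightarrow> nat \<Rightarrow> nat list" where
  "lead_sorted n c = c # [1..<c] @ [Suc c..<Suc n]"

lemma sorted_wrt_upt_skip: "sorted_wrt (<) ([1..<c] @ [Suc c..<Suc n])"
  by (auto simp: sorted_wrt_append)

lemma is_perm_lead_sorted: "1 \<le> c \<Longrightarrow> c \<le> n \<Longrightarrow> is_perm n (lead_sorted n c)"
  unfolding is_perm_def lead_sorted_def by auto

lemma fishburn_lead_sorted: "2 \<le> c \<Longrightarrow> fishburn (lead_sorted n c)"
  unfolding lead_sorted_def by (intro fishburn_Cons_sorted sorted_wrt_upt_skip) auto

lemma not_contains_Cons_sorted: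
  assumes "sorted_wrt (<) xs" and "1 \<le> s" "s < t" "t < length p" "p ! t < p ! s"
  shows "\<not> contains (a # xs) p"
proof
  assume "contains (a # xs) p"
  then obtain idx where len: "length idx = length p" and sorted: "sorted_wrt (<) idx"
      and bound: "\<forall>i<length idx. idx ! i < Suc (length xs)"
      and iso: "\<forall>i<length p. \<forall>j<length p. ((a # xs) ! (idx ! i) < (a # xs) ! (idx ! j)) \<longleftrightarrow> (p ! i < p ! j)"
    unfolding contains_def by auto
  have "idx ! 0 < idx ! s" "idx ! s < idx ! t"
    using sorted len assms(2-4) by (auto simp: sorted_wrt_nth_less)
  moreover have "idx ! t < Suc (length xs)" using bound len assms(4) by simp
  ultimately have "xs ! (idx ! s - 1) < xs ! (idx ! t - 1)"
    using sorted_wrt_nth_less[OF assms(1), of "idx ! s - 1" "idx ! t - 1"] by simp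
  then have "(a # xs) ! (idx ! s) < (a # xs) ! (idx ! t)"
    using \<open>idx ! 0 < idx ! s\<close> \<open>idx ! s < idx ! t\<close> by (simp add: nth_Cons')
  then show False using iso assms(3-5) by auto
qed

lemma lead_sorted_mem_F:
  assumes "2 \<le> c" "c \<le> n"
    and "\<forall>p\<in>set ps. \<exists>s t. 1 \<le> s \<and> s < t \<and> t < length p \<and> p ! t < p ! s"
  shows "lead_sorted n c \<in> F n ps"
proof -
  have "avoids (lead_sorted n c) p" if "p \<in> set ps" for p
    using assms(3) that not_contains_Cons_sorted[OF sorted_wrt_upt_skip]
    unfolding avoids_def lead_sorted_def by blast
  then show ?thesis
    unfolding F_def using assms(1,2) is_perm_lead_sorted fishburn_lead_sorted by auto
qed

lemma Cons_eq_lead_sorted: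
  assumes "is_perm n (c # xs)" and "sorted_wrt (<) xs"
  shows "c # xs = lead_sorted n c"
proof -
  have "c \<in> {1..n}" using assms(1) unfolding is_perm_def by auto
  then have "set ([1..<c] @ [Suc c..<Suc n]) = {1..n} - {c}" by auto
  moreover have "set xs = {1..n} - {c}" using assms(1) unfolding is_perm_def by auto
  ultimately have "set xs = set ([1..<c] @ [Suc c..<Suc n])" by simp
  then have "xs = [1..<c] @ [Suc c..<Suc n]"
    using assms(2) sorted_wrt_upt_skip by (metis sorted_distinct_set_unique strict_sorted_iff)
  then show ?thesis unfolding lead_sorted_def by simp
qed

lemma nth_1_eq_1_if_fishburn_avoids_321:
  assumes perm: "is_perm n \<pi>" and fb: "fishburn \<pi>" and av: "avoids \<pi> [3,2,1]"
    and "0 < n" "\<pi> ! 0 \<noteq> 1"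
  shows "\<pi> ! 1 = 1"
proof -
  define c where "c = \<pi> ! 0"
  have c: "2 \<le> c" "c \<le> n" using is_perm_nth_mem[OF perm \<open>0 < n\<close>] assms(5) c_def by auto
  have len: "length \<pi> = n" using perm unfolding is_perm_def by simp
  have "\<pi> ! 1 \<noteq> c" using is_perm_nth_eq_iff[OF perm, of 1 0] c c_def by simp
  moreover have "\<not> c < \<pi> ! 1"
  proof
    assume "c < \<pi> ! 1"
    have "c - 1 \<in> {1..n}" using c by auto
    then obtain j where j: "j < n" "\<pi> ! j = c - 1" by (rule is_perm_index_of[OF perm])
    then have "0 < j" using c c_def by (cases j) auto
    then have "0 < j \<and> j < length \<pi> \<and> Suc 0 < length \<pi> \<and> \<pi> ! j < \<pi> ! 0
        \<and> \<pi> ! 0 < \<pi> ! Suc 0 \<and> \<pi> ! 0 = \<pi> ! j + 1"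
      using j c len \<open>c < \<pi> ! 1\<close> unfolding c_def by auto
    then show False using fb unfolding fishburn_def by blast
  qed
  ultimately have below: "\<pi> ! 1 < c" by simp
  have "1 \<in> {1..n}" using c by auto
  then obtain j where j: "j < n" "\<pi> ! j = 1" by (rule is_perm_index_of[OF perm])
  then have "0 < j" using c c_def by (cases j) auto
  show ?thesis
  proof (rule ccontr)
    assume "\<pi> ! 1 \<noteq> 1"
    then have "1 < j" using j \<open>0 < j\<close> by (cases "j = 1") auto
    moreover have "1 \<le> \<pi> ! 1" using is_perm_nth_mem[OF perm, of 1] c by auto
    ultimately have "contains \<pi> [3,2,1]"
      using contains_321I[of 0 1 j \<pi>] j below \<open>\<pi> ! 1 \<noteq> 1\<close> len c_def by auto
    then show False using av unfolding avoids_def by simp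
  qed
qed

abbreviation ps_321_3142_2143 :: "nat list list" where
  "ps_321_3142_2143 \<equiv> [[3,2,1], [3,1,4,2], [2,1,4,3]]"

lemma nth_less_nth_if_head_ne_1:
  assumes "\<pi> \<in> F n ps_321_3142_2143" and "\<pi> ! 0 \<noteq> 1"
    and ij: "1 \<le> i" "i < j" "j < n"
  shows "\<pi> ! i < \<pi> ! j"
proof (rule ccontr)
  have perm: "is_perm n \<pi>" and fb: "fishburn \<pi>"
    and av321: "\<not> contains \<pi> [3,2,1]" and av3142: "\<not> contains \<pi> [3,1,4,2]"
    and av2143: "\<not> contains \<pi> [2,1,4,3]"
    using assms(1) unfolding F_def avoids_def by auto
  have len: "length \<pi> = n" using perm unfolding is_perm_def by simp
  define c where "c = \<pi> ! 0"
  have c: "2 \<le> c" using is_perm_nth_mem[OF perm, of 0] ij assms(2) c_def by auto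
  have one: "\<pi> ! 1 = 1"
    using nth_1_eq_1_if_fishburn_avoids_321[OF perm fb] av321 ij assms(2)
    unfolding avoids_def by simp
  assume "\<not> \<pi> ! i < \<pi> ! j"
  moreover have "\<pi> ! i \<noteq> \<pi> ! j" using is_perm_nth_eq_iff[OF perm, of i j] ij by simp
  ultimately have ji: "\<pi> ! j < \<pi> ! i" by simp
  have "1 \<le> \<pi> ! j" using is_perm_nth_mem[OF perm, of j] ij by simp
  then have "i \<noteq> 1" using ji one by auto
  have "\<pi> ! j \<noteq> 1" using is_perm_nth_eq_iff[OF perm, of j 1] ij one by simp
  have "\<pi> ! i \<noteq> c" "\<pi> ! j \<noteq> c"
    using is_perm_nth_eq_iff[OF perm, of _ 0] ij unfolding c_def by auto
  then consider "\<pi> ! i < c" | "c < \<pi> ! j" | "\<pi> ! j < c" "c < \<pi> ! i"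
    using ji by linarith
  then show False
  proof cases
    case 1
    then have "contains \<pi> [3,2,1]"
      using contains_321I[of 0 i j \<pi>] ij ji len c_def by auto
    then show False using av321 by simp
  next
    case 2
    then have "contains \<pi> [2,1,4,3]"
      using contains_2143I[of 0 1 i j \<pi>] ij ji \<open>i \<noteq> 1\<close> len one c c_def by auto
    then show False using av2143 by simp
  next
    case 3
    then have "contains \<pi> [3,1,4,2]"
      using contains_3142I[of 0 1 i j \<pi>] ij \<open>i \<noteq> 1\<close> \<open>\<pi> ! j \<noteq> 1\<close> \<open>1 \<le> \<pi> ! j\<close> len one c_def
      by auto
    then show False using av3142 by simp
  qed
qed

lemma sorted_tl_if_head_ne_1:
  assumes "\<pi> \<in> F n ps_321_3142_2143" and "\<pi> ! 0 \<noteq> 1"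
  shows "sorted_wrt (<) (tl \<pi>)"
proof -
  have "length \<pi> = n" using assms(1) unfolding F_def is_perm_def by simp
  then show ?thesis
    unfolding sorted_wrt_iff_nth_less
    using nth_less_nth_if_head_ne_1[OF assms] by (auto simp: nth_tl)
qed

lemma F_Suc_decomp:
  "F (Suc n) ps_321_3142_2143 = one_oplus ` F n ps_321_3142_2143 \<union> lead_sorted (Suc n) ` {2..Suc n}"
proof (intro equalityI subsetI)
  fix \<pi> assume \<pi>: "\<pi> \<in> F (Suc n) ps_321_3142_2143"
  show "\<pi> \<in> one_oplus ` F n ps_321_3142_2143 \<union> lead_sorted (Suc n) ` {2..Suc n}"
  proof (cases "\<pi> ! 0 = 1")
    case True
    then show ?thesis using F_Suc_head_1[OF \<pi>] by blast
  next
    case False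
    have perm: "is_perm (Suc n) \<pi>" using \<pi> unfolding F_def by simp
    then obtain c xs where \<pi>_eq: "\<pi> = c # xs" unfolding is_perm_def by (cases \<pi>) auto
    have "c \<in> {2..Suc n}" using is_perm_nth_mem[OF perm, of 0] False \<pi>_eq by auto
    moreover have "\<pi> = lead_sorted (Suc n) c"
      using Cons_eq_lead_sorted perm sorted_tl_if_head_ne_1[OF \<pi> False] \<pi>_eq by simp
    ultimately show ?thesis by blast
  qed
next
  have head: "\<forall>p\<in>set ps_321_3142_2143. \<exists>k<length p. p ! k < p ! 0"
    by (simp only: list.set ball_simps) (intro conjI TrueI; rule exI[of _ 1]; simp)
  have tail: "\<forall>p\<in>set ps_321_3142_2143. \<exists>s t. 1 \<le> s \<and> s < t \<and> t < length p \<and> p ! t < p ! s"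
    by (simp only: list.set ball_simps, intro conjI TrueI)
      (rule exI[of _ 1], rule exI[of _ 2], simp, (rule exI[of _ 2], rule exI[of _ 3], simp)+)
  fix \<pi> assume "\<pi> \<in> one_oplus ` F n ps_321_3142_2143 \<union> lead_sorted (Suc n) ` {2..Suc n}"
  then show "\<pi> \<in> F (Suc n) ps_321_3142_2143"
    using one_oplus_mem_F[OF _ head] lead_sorted_mem_F[OF _ _ tail] by auto
qed

lemma finite_F: "finite (F n ps)"
proof (rule finite_subset)
  show "F n ps \<subseteq> {xs. set xs \<subseteq> {1..n} \<and> length xs = n}"
    unfolding F_def is_perm_def by auto
qed (rule finite_lists_length_eq[OF finite_atLeastAtMost])

lemma card_F_Suc: "card (F (Suc n) ps_321_3142_2143) = card (F n ps_321_3142_2143) + n"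
proof -
  have "inj one_oplus" by (rule injI) (simp add: one_oplus_def)
  moreover have "inj (lead_sorted (Suc n))" by (rule injI) (simp add: lead_sorted_def)
  moreover have "one_oplus ` F n ps_321_3142_2143 \<inter> lead_sorted (Suc n) ` {2..Suc n} = {}"
    by (auto simp: one_oplus_def lead_sorted_def)
  ultimately show ?thesis
    unfolding F_Suc_decomp
    by (simp add: card_Un_disjoint finite_F card_image inj_on_subset)
qed

lemma F_0: "[] \<notin> set ps \<Longrightarrow> F 0 ps = {[]}"
  unfolding F_def is_perm_def fishburn_def avoids_def contains_def by auto

theorem mainTheorem10:
  fixes n :: nat
  shows "card (F n [[3,2,1], [3,1,4,2], [2,1,4,3]]) = (n choose 2) + 1"
proof (induction n)
  case 0
  then show ?case by (simp add: F_0)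
next
  case (Suc n)
  have "Suc n choose 2 = n + (n choose 2)" by (simp add: numeral_2_eq_2)
  then show ?case using Suc card_F_Suc by simp
qed

end
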